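(* Let $(C,\mathfrak p,\mathfrak d)$ be a regular $q$-cycle coalgebra with $\mathfrak p_{11}^1\ne0$. Then $\mathfrak d_{i+e,0}^i=\mathfrak p_{i+e,0}^i=0$ for all $i\ge0$ and $e>0$ with $i+e\le n-1$.
   Context: $K$ is an algebraically closed field of characteristic $0$ and $n\ge2$. $C$ is the coalgebra dual to $K[y]/\langle y^n\rangle$: basis $x_0,\dots,x_{n-1}$, $\Delta(x_i)=\sum_{j+k=i}x_j\otimes x_k$, $\epsilon(x_i)=\delta_{i0}$; $C\otimes C$ has the tensor product coalgebra structure; Sweedler notation $\Delta(b)=b_{(1)}\otimes b_{(2)}$. For linear maps $\mathfrak p,\mathfrak d\colon C\otimes C\to C$ write $a\cdot b=\mathfrak p(a\otimes b)$, $a:b=\mathfrak d(a\otimes b)$, $\mathfrak p(x_i\otimes x_j)=\sum_{k=0}^{n-1}\mathfrak p_{ij}^kx_k$, $\mathfrak d(x_i\otimes x_j)=\sum_{k=0}^{n-1}\mathfrak d_{ij}^kx_k$. A triple $(C,\mathfrak p,\mathfrak d)$ with $\mathfrak p,\mathfrak d$ coalgebra morphisms is a regular $q$-magma coalgebra if there are coalgebra morphisms $a\otimes b\mapsto a^b$, $a\otimes b\mapsto a_b$ from $C\otimes C$ to $C$ with $a^{b_{(1)}}\cdot b_{(2)}=(a\cdot b_{(1)})^{b_{(2)}}=\epsilon(b)a$ and $(a:b_{(2)})_{b_{(1)}}=a_{b_{(2)}}:b_{(1)}=\epsilon(b)a$. It is a regular $q$-cycle coalgebra if moreover for all $a,b,c$: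 (1) $(a\cdot b_{(1)})\cdot(c:b_{(2)})=(a\cdot c_{(2)})\cdot(b\cdot c_{(1)})$; (2) $(a\cdot b_{(1)}):(c\cdot b_{(2)})=(a:c_{(2)})\cdot(b:c_{(1)})$; (3) $(a:b_{(1)}):(c:b_{(2)})=(a:c_{(2)}):(b\cdot c_{(1)})$. *)

theory Defs
  imports "HOL-Computational_Algebra.Polynomial" "HOL-Library.Function_Algebras"
begin

text \<open>Coordinate model of the coalgebra C dual to K[y]/(y^n).
  An element of C is a coefficient vector nat => 'a (only indices < n matter);
  x_i is the basis vector; an element of C (x) C is a function nat => nat => 'a.
  A linear map C (x) C -> C is given by its structure constants
  f i j k = f_{ij}^k, i.e. f(x_i (x) x_j) = sum_k f_{ij}^k x_k.\<close>

definition alg_closed_field :: "'a::field itself \<Rightarrow> bool" where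
  "alg_closed_field _ \<longleftrightarrow> (\<forall>q :: 'a poly. 0 < degree q \<longrightarrow> (\<exists>z. poly q z = 0))"

definition bvec :: "nat \<Rightarrow> nat \<Rightarrow> 'a::field" where
  "bvec i = (\<lambda>k. if k = i then 1 else 0)"

definition bil :: "nat \<Rightarrow> (nat \<Rightarrow> nat \<Rightarrow> nat \<Rightarrow> 'a::field) \<Rightarrow> (nat \<Rightarrow> 'a) \<Rightarrow> (nat \<Rightarrow> 'a) \<Rightarrow> nat \<Rightarrow> 'a" where
  "bil n f u w = (\<lambda>k. if k < n then (\<Sum>i<n. \<Sum>j<n. u i * w j * f i j k) else 0)"

definition tens :: "(nat \<Rightarrow> 'a::field) \<Rightarrow> (nat \<Rightarrow> 'a) \<Rightarrow> nat \<Rightarrow> nat \<Rightarrow> 'a" where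
  "tens u w = (\<lambda>a b. u a * w b)"

text \<open>Comultiplication of C: Delta(x_k) = sum_{a+b=k} x_a (x) x_b.\<close>
definition comul :: "nat \<Rightarrow> (nat \<Rightarrow> 'a::field) \<Rightarrow> nat \<Rightarrow> nat \<Rightarrow> 'a" where
  "comul n u = (\<lambda>a b. if a < n \<and> b < n \<and> a + b < n then u (a + b) else 0)"

definition counit :: "(nat \<Rightarrow> 'a::field) \<Rightarrow> 'a" where
  "counit u = u 0"

text \<open>f : C (x) C -> C is a coalgebra morphism, where C (x) C carries the tensor
  product coalgebra structure:
  Delta(x_i (x) x_j) = sum_{a+b=i} sum_{c+d=j} (x_a (x) x_c) (x) (x_b (x) x_d),
  eps(x_i (x) x_j) = eps(x_i) eps(x_j).\<close>
definition coalg_morph :: "nat \<Rightarrow> (nat \<Rightarrow> nat \<Rightarrow> nat \<Rightarrow> 'a::field) \<Rightarrow> bool" where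
  "coalg_morph n f \<longleftrightarrow>
     (\<forall>i<n. \<forall>j<n. comul n (bil n f (bvec i) (bvec j)) =
        (\<Sum>a\<le>i. \<Sum>c\<le>j. tens (bil n f (bvec a) (bvec c)) (bil n f (bvec (i - a)) (bvec (j - c)))))
   \<and> (\<forall>i<n. \<forall>j<n. counit (bil n f (bvec i) (bvec j)) = counit (bvec i :: nat \<Rightarrow> 'a) * counit (bvec j :: nat \<Rightarrow> 'a))"

text \<open>Regular q-magma coalgebra; all identities checked on basis elements a = x_i, b = x_j,
  with Delta(x_j) = sum_{s+t=j} x_s (x) x_t and eps(x_j) = [j = 0].
  Here p is a.b, d is a:b, lu is a^b, ld is a_b.\<close>
definition regular_qmagma :: "nat \<Rightarrow> (nat \<Rightarrow> nat \<Rightarrow> nat \<Rightarrow> 'a::field) \<Rightarrow> (nat \<Rightarrow> nat \<Rightarrow> nat \<Rightarrow> 'a) \<Rightarrow> bool" where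
  "regular_qmagma n p d \<longleftrightarrow> coalg_morph n p \<and> coalg_morph n d \<and>
    (\<exists>lu ld. coalg_morph n lu \<and> coalg_morph n ld \<and>
      (\<forall>i<n. \<forall>j<n.
         (\<Sum>s\<le>j. bil n p (bil n lu (bvec i) (bvec s)) (bvec (j - s))) = (if j = 0 then bvec i else 0)
       \<and> (\<Sum>s\<le>j. bil n lu (bil n p (bvec i) (bvec s)) (bvec (j - s))) = (if j = 0 then bvec i else 0)
       \<and> (\<Sum>s\<le>j. bil n ld (bil n d (bvec i) (bvec (j - s))) (bvec s)) = (if j = 0 then bvec i else 0)
       \<and> (\<Sum>s\<le>j. bil n d (bil n ld (bvec i) (bvec (j - s))) (bvec s)) = (if j = 0 then bvec i else 0)))"

text \<open>Regular q-cycle coalgebra: identities (1)-(3) on basis elements a = x_i, b = x_j, c = x_l.\<close>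
definition regular_qcycle :: "nat \<Rightarrow> (nat \<Rightarrow> nat \<Rightarrow> nat \<Rightarrow> 'a::field) \<Rightarrow> (nat \<Rightarrow> nat \<Rightarrow> nat \<Rightarrow> 'a) \<Rightarrow> bool" where
  "regular_qcycle n p d \<longleftrightarrow> regular_qmagma n p d \<and>
    (\<forall>i<n. \<forall>j<n. \<forall>l<n.
       (\<Sum>s\<le>j. bil n p (bil n p (bvec i) (bvec s)) (bil n d (bvec l) (bvec (j - s))))
         = (\<Sum>s\<le>l. bil n p (bil n p (bvec i) (bvec (l - s))) (bil n p (bvec j) (bvec s)))
     \<and> (\<Sum>s\<le>j. bil n d (bil n p (bvec i) (bvec s)) (bil n p (bvec l) (bvec (j - s))))
         = (\<Sum>s\<le>l. bil n p (bil n d (bvec i) (bvec (l - s))) (bil n d (bvec j) (bvec s)))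
     \<and> (\<Sum>s\<le>j. bil n d (bil n d (bvec i) (bvec s)) (bil n d (bvec l) (bvec (j - s))))
         = (\<Sum>s\<le>l. bil n d (bil n d (bvec i) (bvec (l - s))) (bil n p (bvec j) (bvec s))))"

end

theory Submission
  imports Defs
begin

text \<open>A coalgebra morphism f : C \<otimes> C \<rightarrow> C is dual to an algebra map
  K[y]/(y^n) \<rightarrow> K[u,v]/(u^n,v^n), so it is determined by the image
  \<phi> = \<Sum> f_{ij}^1 u^i v^j of y: f_{ij}^k is the coefficient of u^i v^j in \<phi>^k, and \<phi>^n = 0.
  Nilpotency forces \<phi>(0,0) = 0, so \<phi>^k has no terms of total degree below k.
  Regularity makes the coefficient f_{10}^1 of u nonzero, and then the vanishing
  coefficient n f_{10}^1 (f_{01}^1)^(n-1) of u v^(n-1) in \<phi>^n kills the coefficient of v.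
  The coefficient of x_1 in the cycle identities (1) and (2) at (x_m, x_1, x_0), combined with
  p_{11}^1 \<noteq> 0, first gives f_{10}^1 = 1 and then, by induction on m, f_{m0}^1 = 0 for m \<ge> 2.
  So \<phi>(u,0) = u for both operations: x_0 is a right unit, f_{x0}^k = [x = k].\<close>

lemma sum_fun_apply: "(\<Sum>x\<in>A. F x) y = (\<Sum>x\<in>A. F x y)"
  by (induction A rule: infinite_finite_induct) auto

lemma sum_eq_single_support:
  assumes "finite A" "x \<in> A" "\<And>y. y \<in> A \<Longrightarrow> y \<noteq> x \<Longrightarrow> g y = 0"
  shows "sum g A = g x"
  using assms sum.mono_neutral_right[of A "{x}" g] by auto

lemma sum_eq_two_support:
  assumes "finite A" "x \<in> A" "y \<in> A" "x \<noteq> y"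
    and "\<And>z. z \<in> A \<Longrightarrow> z \<noteq> x \<Longrightarrow> z \<noteq> y \<Longrightarrow> g z = 0"
  shows "sum g A = g x + g y"
  using assms sum.mono_neutral_right[of A "{x, y}" g] by auto

lemma bil_bvec_bvec:
  assumes "i < n" "j < n"
  shows "bil n f (bvec i) (bvec j) k = (if k < n then f i j k else (0::'a::field))"
  using assms
  by (simp add: bil_def bvec_def if_distrib[where f = "\<lambda>y. y * _"]
      if_distrib[where f = "\<lambda>y. _ * y"] sum.delta' cong: if_cong)

lemma bil_right_multiple_bvec:
  fixes f :: "nat \<Rightarrow> nat \<Rightarrow> nat \<Rightarrow> 'a::field"
  assumes "t < n" "k < n" "\<And>j. j < n \<Longrightarrow> w j = (if j = t then c else 0)"
  shows "bil n f u w k = c * (\<Sum>i<n. u i * f i t k)"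
proof -
  have "(\<Sum>j<n. u i * w j * f i j k) = c * (u i * f i t k)" for i
    using assms by (subst sum_eq_single_support[where x = t]) auto
  then show ?thesis
    using assms by (simp add: bil_def sum_distrib_left)
qed

lemma coalg_morph_convolution:
  fixes f :: "nat \<Rightarrow> nat \<Rightarrow> nat \<Rightarrow> 'a::field"
  assumes "coalg_morph n f" "i < n" "j < n" "a < n" "b < n"
  shows "(\<Sum>a'\<le>i. \<Sum>c'\<le>j. f a' c' a * f (i - a') (j - c') b)
    = (if a + b < n then f i j (a + b) else 0)"
proof -
  have "comul n (bil n f (bvec i) (bvec j)) a b =
      (\<Sum>a'\<le>i. \<Sum>c'\<le>j. tens (bil n f (bvec a') (bvec c')) (bil n f (bvec (i - a')) (bvec (j - c')))) a b"
    using assms unfolding coalg_morph_def by simp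
  with assms show ?thesis
    by (auto simp: comul_def tens_def sum_fun_apply bil_bvec_bvec)
qed

lemma coalg_morph_counit:
  fixes f :: "nat \<Rightarrow> nat \<Rightarrow> nat \<Rightarrow> 'a::field"
  assumes "coalg_morph n f" "i < n" "j < n"
  shows "f i j 0 = (if i = 0 \<and> j = 0 then 1 else 0)"
proof -
  have "counit (bil n f (bvec i) (bvec j)) = counit (bvec i :: nat \<Rightarrow> 'a) * counit (bvec j :: nat \<Rightarrow> 'a)"
    using assms unfolding coalg_morph_def by blast
  with assms show ?thesis
    by (simp add: counit_def bil_bvec_bvec) (simp add: bvec_def)
qed

lemma coalg_morph_power_step:
  fixes f :: "nat \<Rightarrow> nat \<Rightarrow> nat \<Rightarrow> 'a::field"
  assumes "coalg_morph n f" "0 < k" "k < n" "i < n" "j < n"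
  shows "f i j k = (\<Sum>a'\<le>i. \<Sum>c'\<le>j. f a' c' 1 * f (i - a') (j - c') (k - 1))"
  using coalg_morph_convolution[OF assms(1,4,5), of 1 "k - 1"] assms by simp

lemma coalg_morph_no_constant_term:
  fixes f :: "nat \<Rightarrow> nat \<Rightarrow> nat \<Rightarrow> 'a::field"
  assumes cm: "coalg_morph n f" and "2 \<le> n"
  shows "f 0 0 1 = 0"
proof -
  have power: "f 0 0 k = f 0 0 1 ^ k" if "k < n" for k
    using that
  proof (induction k)
    case 0
    then show ?case using coalg_morph_counit[OF cm] by simp
  next
    case (Suc k)
    then show ?case using coalg_morph_power_step[OF cm, of "Suc k" 0 0] by simp
  qed
  obtain m where m: "n = Suc m" using assms(2) by (cases n) auto
  have "0 = f 0 0 1 * f 0 0 m"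
    using coalg_morph_convolution[OF cm, of 0 0 1 m] assms m by simp
  also have "\<dots> = f 0 0 1 ^ n"
    using power[of m] m by simp
  finally show ?thesis by simp
qed

lemma coalg_morph_weighted_vanishing:
  fixes f :: "nat \<Rightarrow> nat \<Rightarrow> nat \<Rightarrow> 'a::field"
  assumes cm: "coalg_morph n f"
    and first: "\<And>i j. i < n \<Longrightarrow> j < n \<Longrightarrow> A * i + B * j < C \<Longrightarrow> f i j 1 = 0"
  shows "k < n \<Longrightarrow> i < n \<Longrightarrow> j < n \<Longrightarrow> A * i + B * j < C * k \<Longrightarrow> f i j k = 0"
proof (induction k arbitrary: i j)
  case 0
  then show ?case by simp
next
  case (Suc k)
  show ?case
  proof (cases "k = 0")
    case True
    then show ?thesis using Suc first by simp
  next
    case False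
    have "f a' c' 1 * f (i - a') (j - c') k = 0" if "a' \<le> i" "c' \<le> j" for a' c'
    proof (cases "A * a' + B * c' < C")
      case True
      then show ?thesis using first[of a' c'] that Suc.prems by simp
    next
      case False
      have "A * a' \<le> A * i" "B * c' \<le> B * j"
        using that by simp_all
      then have "A * (i - a') + B * (j - c') < C * k"
        using False Suc.prems(4) unfolding diff_mult_distrib2 mult_Suc_right by linarith
      then show ?thesis using Suc.IH[of "i - a'" "j - c'"] Suc.prems by simp
    qed
    then show ?thesis
      using coalg_morph_power_step[OF cm, of "Suc k" i j] Suc.prems
      by (simp del: mult_eq_0_iff add: sum.neutral)
  qed
qed

lemma coalg_morph_vanishes_below_degree:
  fixes f :: "nat \<Rightarrow> nat \<Rightarrow> nat \<Rightarrow> 'a::field"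
  assumes cm: "coalg_morph n f" and n2: "2 \<le> n" and "k < n" "i < n" "j < n" "i + j < k"
  shows "f i j k = 0"
  using coalg_morph_weighted_vanishing[where A = 1 and B = 1 and C = 1, OF cm _, of k i j]
    coalg_morph_no_constant_term[OF cm n2] assms by simp

lemma coalg_morph_vanishes_below_weight_2_1:
  fixes f :: "nat \<Rightarrow> nat \<Rightarrow> nat \<Rightarrow> 'a::field"
  assumes cm: "coalg_morph n f" and n2: "2 \<le> n" and v: "f 0 1 1 = 0"
    and "k < n" "i < n" "j < n" "2 * i + j < 2 * k"
  shows "f i j k = 0"
proof -
  have "f i j 1 = 0" if "2 * i + 1 * j < 2" for i j
    using that coalg_morph_no_constant_term[OF cm n2] v by (cases j) auto
  then show ?thesis
    using coalg_morph_weighted_vanishing[where A = 2 and B = 1 and C = 2, OF cm, of k i j] assms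
    by simp
qed

lemma coalg_morph_pure_power_right:
  fixes f :: "nat \<Rightarrow> nat \<Rightarrow> nat \<Rightarrow> 'a::field"
  assumes cm: "coalg_morph n f" and n2: "2 \<le> n"
  shows "k < n \<Longrightarrow> f 0 k k = f 0 1 1 ^ k"
proof (induction k)
  case 0
  then show ?case using coalg_morph_counit[OF cm] by simp
next
  case (Suc k)
  have "f 0 c' 1 * f 0 (Suc k - c') k = 0" if "c' \<le> Suc k" "c' \<noteq> 1" for c'
    using that Suc.prems coalg_morph_no_constant_term[OF cm n2]
      coalg_morph_vanishes_below_degree[OF cm n2, of k 0 "Suc k - c'"]
    by (cases "c' = 0") auto
  then have "(\<Sum>c'\<le>Suc k. f 0 c' 1 * f 0 (Suc k - c') k) = f 0 1 1 * f 0 k k"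
    by (subst sum_eq_single_support[where x = 1]) auto
  then show ?case
    using coalg_morph_power_step[OF cm, of "Suc k" 0 "Suc k"] Suc by simp
qed

text \<open>For k + 2 = n the left-hand side is the coefficient of u v^(n-1) in \<phi>^n = 0.\<close>
lemma coalg_morph_coeff_1_k_recursion:
  fixes f :: "nat \<Rightarrow> nat \<Rightarrow> nat \<Rightarrow> 'a::field"
  assumes cm: "coalg_morph n f" and n2: "2 \<le> n" and kn: "Suc k < n"
  shows "(if Suc (Suc k) < n then f 1 (Suc k) (Suc (Suc k)) else 0)
    = f 0 1 1 * f 1 k (Suc k) + f 1 0 1 * f 0 1 1 ^ Suc k"
proof -
  have "f 0 c' 1 * f 1 (Suc k - c') (Suc k) = 0" if "c' \<le> Suc k" "c' \<noteq> 1" for c'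
    using that kn coalg_morph_no_constant_term[OF cm n2]
      coalg_morph_vanishes_below_degree[OF cm n2, of "Suc k" 1 "Suc k - c'"]
    by (cases "c' = 0") auto
  then have left: "(\<Sum>c'\<le>Suc k. f 0 c' 1 * f 1 (Suc k - c') (Suc k)) = f 0 1 1 * f 1 k (Suc k)"
    by (subst sum_eq_single_support[where x = 1]) auto
  have "f 1 c' 1 * f 0 (Suc k - c') (Suc k) = 0" if "c' \<le> Suc k" "c' \<noteq> 0" for c'
    using that kn coalg_morph_vanishes_below_degree[OF cm n2, of "Suc k" 0 "Suc k - c'"] by auto
  then have right: "(\<Sum>c'\<le>Suc k. f 1 c' 1 * f 0 (Suc k - c') (Suc k)) = f 1 0 1 * f 0 1 1 ^ Suc k"
    using coalg_morph_pure_power_right[OF cm n2 kn] by (subst sum_eq_single_support[where x = 0]) auto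
  have "{..Suc 0} = {0, 1}" by auto
  then show ?thesis
    using coalg_morph_convolution[OF cm, of 1 "Suc k" 1 "Suc k"] left right kn by simp
qed

lemma coalg_morph_coeff_1_k:
  fixes f :: "nat \<Rightarrow> nat \<Rightarrow> nat \<Rightarrow> 'a::field"
  assumes cm: "coalg_morph n f" and n2: "2 \<le> n"
  shows "Suc k < n \<Longrightarrow> f 1 k (Suc k) = of_nat (Suc k) * f 1 0 1 * f 0 1 1 ^ k"
proof (induction k)
  case 0
  then show ?case by simp
next
  case (Suc k)
  then show ?case
    using coalg_morph_coeff_1_k_recursion[OF cm n2, of k] by (simp add: algebra_simps)
qed

lemma coalg_morph_no_linear_v_term:
  fixes f :: "nat \<Rightarrow> nat \<Rightarrow> nat \<Rightarrow> 'a::field_char_0"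
  assumes cm: "coalg_morph n f" and n2: "2 \<le> n" and u: "f 1 0 1 \<noteq> 0"
  shows "f 0 1 1 = 0"
proof -
  obtain k where k: "n = Suc (Suc k)" using n2 by (metis add_2_eq_Suc le_Suc_ex)
  have "0 = f 0 1 1 * (of_nat (Suc k) * f 1 0 1 * f 0 1 1 ^ k) + f 1 0 1 * f 0 1 1 ^ Suc k"
    using coalg_morph_coeff_1_k_recursion[OF cm n2, of k] coalg_morph_coeff_1_k[OF cm n2, of k] k
    by simp
  also have "\<dots> = of_nat n * f 1 0 1 * f 0 1 1 ^ Suc k"
    using k by (simp add: algebra_simps)
  finally show ?thesis using u n2 by auto
qed

text \<open>If \<phi>(u,0) = u + O(u^m), then \<phi>(u,0)^(k+1) = u^(k+1) + O(u^(m+k)).\<close>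
lemma coalg_morph_first_column:
  fixes f :: "nat \<Rightarrow> nat \<Rightarrow> nat \<Rightarrow> 'a::field"
  assumes cm: "coalg_morph n f" and n2: "2 \<le> n" and u: "f 1 0 1 = 1"
    and low: "\<And>r. 2 \<le> r \<Longrightarrow> r < m \<Longrightarrow> f r 0 1 = 0"
  shows "Suc k < n \<Longrightarrow> x < n \<Longrightarrow> x < m + k \<Longrightarrow> f x 0 (Suc k) = (if x = Suc k then 1 else 0)"
proof (induction k arbitrary: x)
  case 0
  then show ?case
    using coalg_morph_no_constant_term[OF cm n2] u low[of x] by (cases "x = 0"; cases "x = 1") auto
next
  case (Suc k)
  have "f a' 0 1 * f (x - a') 0 (Suc k) = 0" if "a' \<le> x" "a' \<noteq> 1" for a'
  proof -
    consider "a' = 0" | "2 \<le> a'" "a' < m" | "m \<le> a'"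
      using \<open>a' \<noteq> 1\<close> by linarith
    then show ?thesis
    proof cases
      case 1
      then show ?thesis using coalg_morph_no_constant_term[OF cm n2] by simp
    next
      case 2
      then show ?thesis using low[of a'] that Suc.prems by simp
    next
      case 3
      then show ?thesis
        using coalg_morph_vanishes_below_degree[OF cm n2, of "Suc k" "x - a'" 0] that Suc.prems
        by simp
    qed
  qed
  then have "(\<Sum>a'\<le>x. f a' 0 1 * f (x - a') 0 (Suc k)) = f (x - 1) 0 (Suc k)" if "0 < x"
    using u that by (subst sum_eq_single_support[where x = 1]) auto
  then show ?case
    using coalg_morph_power_step[OF cm, of "Suc (Suc k)" x 0] Suc.IH[of "x - 1"] Suc.prems
      coalg_morph_vanishes_below_degree[OF cm n2, of "Suc (Suc k)" 0 0]
    by (cases "x = 0") auto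
qed

lemma coalg_morph_diagonal_first_column:
  fixes f :: "nat \<Rightarrow> nat \<Rightarrow> nat \<Rightarrow> 'a::field"
  assumes cm: "coalg_morph n f" and n2: "2 \<le> n" and u: "f 1 0 1 = 1" and "k < n"
  shows "f k 0 k = 1"
proof (cases k)
  case 0
  then show ?thesis using coalg_morph_counit[OF cm] assms by simp
next
  case (Suc k')
  then show ?thesis
    using coalg_morph_first_column[OF cm n2 u, of 2 k' k] assms by simp
qed

lemma coalg_morph_first_column_row:
  fixes f :: "nat \<Rightarrow> nat \<Rightarrow> nat \<Rightarrow> 'a::field"
  assumes cm: "coalg_morph n f" and n2: "2 \<le> n" and u: "f 1 0 1 = 1"
    and low: "\<And>r. 2 \<le> r \<Longrightarrow> r < m \<Longrightarrow> f r 0 1 = 0"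
    and "m < n" "2 \<le> i" "i < n"
  shows "f m 0 i = (if i = m then 1 else 0)"
proof -
  obtain j where "i = Suc j" using assms by (cases i) auto
  then show ?thesis
    using assms coalg_morph_first_column[OF cm n2 u low, where k = j and x = m]
      coalg_morph_vanishes_below_degree[OF cm n2, of i m 0]
    by (cases "i \<le> m") auto
qed

lemma coalg_morph_coeff_k_1_k:
  fixes f :: "nat \<Rightarrow> nat \<Rightarrow> nat \<Rightarrow> 'a::field"
  assumes cm: "coalg_morph n f" and n2: "2 \<le> n" and v: "f 0 1 1 = 0" and u: "f 1 0 1 = 1"
  shows "k < n \<Longrightarrow> f k 1 k = of_nat k * f 1 1 1"
proof (induction k)
  case 0
  then show ?case using coalg_morph_counit[OF cm, of 0 1] n2 by simp
next
  case (Suc k)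
  have "f a' 0 1 * f (Suc k - a') 1 k + f a' 1 1 * f (Suc k - a') 0 k = 0"
    if "a' \<le> Suc k" "a' \<noteq> 1" for a'
  proof (cases "a' = 0")
    case True
    then show ?thesis using coalg_morph_no_constant_term[OF cm n2] v by simp
  next
    case False
    then show ?thesis
      using that Suc.prems coalg_morph_vanishes_below_weight_2_1[OF cm n2 v, of k "Suc k - a'" 1]
        coalg_morph_vanishes_below_degree[OF cm n2, of k "Suc k - a'" 0]
      by simp
  qed
  then have "(\<Sum>a'\<le>Suc k. f a' 0 1 * f (Suc k - a') 1 k + f a' 1 1 * f (Suc k - a') 0 k)
      = f 1 0 1 * f k 1 k + f 1 1 1 * f k 0 k"
    by (subst sum_eq_single_support[where x = 1]) auto
  moreover have "{..Suc 0} = {0, 1}" by auto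
  ultimately show ?case
    using coalg_morph_power_step[OF cm, of "Suc k" "Suc k" 1] Suc u
      coalg_morph_diagonal_first_column[OF cm n2 u, of k]
    by (simp add: algebra_simps)
qed

lemma coalg_morph_unit_coeff:
  fixes f :: "nat \<Rightarrow> nat \<Rightarrow> nat \<Rightarrow> 'a::field"
  assumes cm: "coalg_morph n f" and n2: "2 \<le> n" and "k < n"
  shows "f 0 0 k = (if k = 0 then 1 else 0)"
  using assms coalg_morph_counit[OF cm, of 0 0] coalg_morph_vanishes_below_degree[OF cm n2, of k 0 0]
  by auto

lemma coalg_morph_linear_coeff:
  fixes f :: "nat \<Rightarrow> nat \<Rightarrow> nat \<Rightarrow> 'a::field"
  assumes cm: "coalg_morph n f" and n2: "2 \<le> n" and "i + j = 1" "k < n" "k \<noteq> 1"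
  shows "f i j k = 0"
  using assms coalg_morph_counit[OF cm, of i j] coalg_morph_vanishes_below_degree[OF cm n2, of k i j]
  by (cases "k = 0") auto

lemma coalg_morph_left_coeff_nonzero:
  fixes f g :: "nat \<Rightarrow> nat \<Rightarrow> nat \<Rightarrow> 'a::field"
  assumes cm: "coalg_morph n f" and n2: "2 \<le> n"
    and inverse: "bil n g (bil n f (bvec 1) (bvec 0)) (bvec 0) 1 = 1"
  shows "f 1 0 1 \<noteq> 0"
proof -
  have "bil n g (bil n f (bvec 1) (bvec 0)) (bvec 0) 1
      = 1 * (\<Sum>i<n. bil n f (bvec 1) (bvec 0) i * g i 0 1)"
    using n2 by (intro bil_right_multiple_bvec) (auto simp: bvec_def)
  also have "\<dots> = (\<Sum>i<n. f 1 0 i * g i 0 1)"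
    using n2 by (auto simp: bil_bvec_bvec intro!: sum.cong)
  also have "\<dots> = f 1 0 1 * g 1 0 1"
    using n2 coalg_morph_linear_coeff[OF cm n2, of 1 0] by (subst sum_eq_single_support[where x = 1]) auto
  finally show ?thesis using inverse by auto
qed

lemma regular_qmagma_left_coeffs_nonzero:
  fixes p d :: "nat \<Rightarrow> nat \<Rightarrow> nat \<Rightarrow> 'a::field"
  assumes qm: "regular_qmagma n p d" and n2: "2 \<le> n"
  shows "p 1 0 1 \<noteq> 0" "d 1 0 1 \<noteq> 0"
proof -
  have cm: "coalg_morph n p" "coalg_morph n d"
    using qm unfolding regular_qmagma_def by blast+
  obtain lu ld where inverses: "\<forall>i<n. \<forall>j<n.
      (\<Sum>s\<le>j. bil n lu (bil n p (bvec i) (bvec s)) (bvec (j - s))) = (if j = 0 then bvec i else 0)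
    \<and> (\<Sum>s\<le>j. bil n ld (bil n d (bvec i) (bvec (j - s))) (bvec s)) = (if j = 0 then bvec i else 0)"
    using qm unfolding regular_qmagma_def by blast
  have "bil n lu (bil n p (bvec 1) (bvec 0)) (bvec 0) = bvec 1"
    "bil n ld (bil n d (bvec 1) (bvec 0)) (bvec 0) = bvec 1"
    using inverses[rule_format, of 1 0] n2 by simp_all
  then show "p 1 0 1 \<noteq> 0" "d 1 0 1 \<noteq> 0"
    using coalg_morph_left_coeff_nonzero[OF cm(1) n2, of lu]
      coalg_morph_left_coeff_nonzero[OF cm(2) n2, of ld]
    by (simp_all add: bvec_def)
qed

text \<open>The coefficient of x_1 in identity (1) (for G = p, D = d) or (2) (for G = d, D = p)
  at a = x_m, b = x_1, c = x_0.\<close>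
definition linear_cycle_relation ::
  "nat \<Rightarrow> (nat \<Rightarrow> nat \<Rightarrow> nat \<Rightarrow> 'a::field) \<Rightarrow> (nat \<Rightarrow> nat \<Rightarrow> nat \<Rightarrow> 'a) \<Rightarrow> bool" where
  "linear_cycle_relation n p G \<longleftrightarrow>
     (\<forall>m<n. (\<Sum>i<n. p m 1 i * G i 0 1) = G 1 0 1 * (\<Sum>i<n. G m 0 i * p i 1 1))"

lemma linear_cycle_relationI:
  fixes p G D :: "nat \<Rightarrow> nat \<Rightarrow> nat \<Rightarrow> 'a::field"
  assumes cg: "coalg_morph n G" and cd: "coalg_morph n D" and n2: "2 \<le> n" and v: "D 0 1 1 = 0"
    and cycle: "\<forall>m<n.
      (\<Sum>s\<le>1. bil n G (bil n p (bvec m) (bvec s)) (bil n D (bvec 0) (bvec (1 - s))))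
        = (\<Sum>s\<le>0. bil n p (bil n G (bvec m) (bvec (0 - s))) (bil n G (bvec 1) (bvec s)))"
  shows "linear_cycle_relation n p G"
  unfolding linear_cycle_relation_def
proof (intro allI impI)
  fix m assume m: "m < n"
  have "bil n D (bvec 0) (bvec 1) = (\<lambda>_. 0)"
    using n2 v coalg_morph_linear_coeff[OF cd n2, of 0 1] by (auto simp: bil_bvec_bvec fun_eq_iff)
  then have first: "bil n G (bil n p (bvec m) (bvec 0)) (bil n D (bvec 0) (bvec 1)) 1 = 0"
    by (simp add: bil_def)
  have "bil n G (bil n p (bvec m) (bvec 1)) (bil n D (bvec 0) (bvec 0)) 1
      = 1 * (\<Sum>i<n. bil n p (bvec m) (bvec 1) i * G i 0 1)"
    using n2 coalg_morph_unit_coeff[OF cd n2] by (intro bil_right_multiple_bvec) (auto simp: bil_bvec_bvec)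
  also have "\<dots> = (\<Sum>i<n. p m 1 i * G i 0 1)"
    using n2 m by (auto simp: bil_bvec_bvec intro!: sum.cong)
  finally have second: "bil n G (bil n p (bvec m) (bvec 1)) (bil n D (bvec 0) (bvec 0)) 1
      = (\<Sum>i<n. p m 1 i * G i 0 1)" .
  have "bil n p (bil n G (bvec m) (bvec 0)) (bil n G (bvec 1) (bvec 0)) 1
      = G 1 0 1 * (\<Sum>i<n. bil n G (bvec m) (bvec 0) i * p i 1 1)"
    using n2 coalg_morph_linear_coeff[OF cg n2, of 1 0]
    by (intro bil_right_multiple_bvec) (auto simp: bil_bvec_bvec)
  also have "\<dots> = G 1 0 1 * (\<Sum>i<n. G m 0 i * p i 1 1)"
    using n2 m by (auto simp: bil_bvec_bvec intro!: sum.cong)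
  finally have third: "bil n p (bil n G (bvec m) (bvec 0)) (bil n G (bvec 1) (bvec 0)) 1
      = G 1 0 1 * (\<Sum>i<n. G m 0 i * p i 1 1)" .
  have "{..Suc 0} = {0, 1}" by auto
  then show "(\<Sum>i<n. p m 1 i * G i 0 1) = G 1 0 1 * (\<Sum>i<n. G m 0 i * p i 1 1)"
    using fun_cong[OF cycle[rule_format, OF m], of 1] first second third
    by (simp add: sum_fun_apply)
qed

lemma regular_qcycle_linear_cycle_relations:
  fixes p d :: "nat \<Rightarrow> nat \<Rightarrow> nat \<Rightarrow> 'a::field"
  assumes qc: "regular_qcycle n p d" and n2: "2 \<le> n" and "p 0 1 1 = 0" "d 0 1 1 = 0"
  shows "linear_cycle_relation n p p" "linear_cycle_relation n p d"
proof -
  have cm: "coalg_morph n p" "coalg_morph n d"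
    using qc unfolding regular_qcycle_def regular_qmagma_def by blast+
  have "0 < n" "1 < n" using n2 by auto
  with qc have
    "\<forall>m<n. (\<Sum>s\<le>1. bil n p (bil n p (bvec m) (bvec s)) (bil n d (bvec 0) (bvec (1 - s))))
        = (\<Sum>s\<le>0. bil n p (bil n p (bvec m) (bvec (0 - s))) (bil n p (bvec 1) (bvec s)))"
    "\<forall>m<n. (\<Sum>s\<le>1. bil n d (bil n p (bvec m) (bvec s)) (bil n p (bvec 0) (bvec (1 - s))))
        = (\<Sum>s\<le>0. bil n p (bil n d (bvec m) (bvec (0 - s))) (bil n d (bvec 1) (bvec s)))"
    unfolding regular_qcycle_def by blast+
  then show "linear_cycle_relation n p p" "linear_cycle_relation n p d"
    using linear_cycle_relationI[OF cm(1) cm(2) n2] linear_cycle_relationI[OF cm(2) cm(1) n2] assms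
    by blast+
qed

lemma linear_cycle_relation_left_coeff:
  fixes p G :: "nat \<Rightarrow> nat \<Rightarrow> nat \<Rightarrow> 'a::field"
  assumes cp: "coalg_morph n p" and cg: "coalg_morph n G" and n2: "2 \<le> n"
    and v: "p 0 1 1 = 0" and pi: "p 1 1 1 \<noteq> 0" and u: "G 1 0 1 \<noteq> 0"
    and rel: "linear_cycle_relation n p G"
  shows "G 1 0 1 = 1"
proof -
  have "p 1 1 i = 0" if "i < n" "i \<noteq> 1" for i
    using that n2 coalg_morph_counit[OF cp, of 1 1] coalg_morph_vanishes_below_weight_2_1[OF cp n2 v, of i 1 1]
    by (cases "i = 0") auto
  then have left: "(\<Sum>i<n. p 1 1 i * G i 0 1) = p 1 1 1 * G 1 0 1"
    using n2 by (subst sum_eq_single_support[where x = 1]) auto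
  have right: "(\<Sum>i<n. G 1 0 i * p i 1 1) = G 1 0 1 * p 1 1 1"
    using n2 coalg_morph_linear_coeff[OF cg n2, of 1 0] by (subst sum_eq_single_support[where x = 1]) auto
  have "p 1 1 1 * G 1 0 1 = G 1 0 1 * (G 1 0 1 * p 1 1 1)"
    using rel n2 left right unfolding linear_cycle_relation_def by auto
  then have "(G 1 0 1 - 1) * (G 1 0 1 * p 1 1 1) = 0"
    by (simp add: algebra_simps)
  then show ?thesis using pi u by simp
qed

text \<open>If \<phi>(u,0) = u + c u^m + O(u^(m+1)) for G, the relation at x_m reads
  p_{m1}^1 + m p_{11}^1 c = c p_{11}^1 + p_{m1}^1, so c = 0 in characteristic 0.\<close>
lemma linear_cycle_relation_first_column_step:
  fixes p G :: "nat \<Rightarrow> nat \<Rightarrow> nat \<Rightarrow> 'a::field_char_0"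
  assumes cp: "coalg_morph n p" and cg: "coalg_morph n G" and n2: "2 \<le> n"
    and v: "p 0 1 1 = 0" and u: "p 1 0 1 = 1" and g: "G 1 0 1 = 1" and pi: "p 1 1 1 \<noteq> 0"
    and rel: "linear_cycle_relation n p G"
    and m: "2 \<le> m" "m < n"
    and low: "\<And>r. 2 \<le> r \<Longrightarrow> r < m \<Longrightarrow> G r 0 1 = 0"
  shows "G m 0 1 = 0"
proof -
  have "p m 1 i * G i 0 1 = 0" if i: "i < n" "i \<noteq> 1" "i \<noteq> m" for i
  proof -
    consider "i = 0" | "2 \<le> i" "i < m" | "m < i"
      using i by linarith
    then show ?thesis
    proof cases
      case 1
      then show ?thesis using coalg_morph_counit[OF cp, of m 1] m by simp
    next
      case 2
      then show ?thesis using low[of i] by simp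
    next
      case 3
      then show ?thesis using coalg_morph_vanishes_below_weight_2_1[OF cp n2 v, of i m 1] i m by simp
    qed
  qed
  then have left: "(\<Sum>i<n. p m 1 i * G i 0 1) = p m 1 1 * G 1 0 1 + p m 1 m * G m 0 1"
    using m by (intro sum_eq_two_support) auto
  have "G m 0 i * p i 1 1 = 0" if "i < n" "i \<noteq> 1" "i \<noteq> m" for i
    using that m coalg_morph_counit[OF cg, of m 0]
      coalg_morph_first_column_row[OF cg n2 g low m(2)]
    by (cases "i = 0") auto
  then have right: "(\<Sum>i<n. G m 0 i * p i 1 1) = G m 0 1 * p 1 1 1 + G m 0 m * p m 1 1"
    using m by (intro sum_eq_two_support) auto
  have diagonal: "G m 0 m = 1"
    using coalg_morph_first_column_row[OF cg n2 g low m(2) m] by simp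
  have "(\<Sum>i<n. p m 1 i * G i 0 1) = G 1 0 1 * (\<Sum>i<n. G m 0 i * p i 1 1)"
    using rel m unfolding linear_cycle_relation_def by blast
  then have "p m 1 1 + of_nat m * p 1 1 1 * G m 0 1 = G m 0 1 * p 1 1 1 + p m 1 1"
    unfolding left right g diagonal coalg_morph_coeff_k_1_k[OF cp n2 v u m(2)]
    by (simp add: algebra_simps)
  then have "(of_nat m - 1) * p 1 1 1 * G m 0 1 = 0"
    by (simp add: algebra_simps)
  moreover have "(of_nat m - 1 :: 'a) \<noteq> 0"
    using m by simp
  ultimately show ?thesis using pi by simp
qed

lemma linear_cycle_relation_right_unit:
  fixes p G :: "nat \<Rightarrow> nat \<Rightarrow> nat \<Rightarrow> 'a::field_char_0"
  assumes cp: "coalg_morph n p" and cg: "coalg_morph n G" and n2: "2 \<le> n"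
    and v: "p 0 1 1 = 0" and u: "p 1 0 1 = 1" and g: "G 1 0 1 = 1" and pi: "p 1 1 1 \<noteq> 0"
    and rel: "linear_cycle_relation n p G"
    and "x < n" "k < n"
  shows "G x 0 k = (if x = k then 1 else 0)"
proof -
  have low: "G r 0 1 = 0" if "2 \<le> r" "r < n" for r
    using that
  proof (induction r rule: less_induct)
    case (less r)
    then show ?case
      using linear_cycle_relation_first_column_step[OF cp cg n2 v u g pi rel, of r] by simp
  qed
  show ?thesis
  proof (cases k)
    case 0
    then show ?thesis using coalg_morph_counit[OF cg] assms by simp
  next
    case (Suc k')
    then show ?thesis using coalg_morph_first_column[OF cg n2 g low, where k = k' and x = x] assms by simp
  qed
qed

theorem proposition4p1:
  fixes n :: nat and p d :: "nat \<Rightarrow> nat \<Rightarrow> nat \<Rightarrow> 'a::field_char_0"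
  assumes "alg_closed_field TYPE('a)"
    and "n \<ge> 2"
    and "regular_qcycle n p d"
    and "p 1 1 1 \<noteq> 0"
  shows "\<forall>i e. 0 < e \<and> i + e \<le> n - 1 \<longrightarrow> d (i + e) 0 i = 0 \<and> p (i + e) 0 i = 0"
proof -
  have n2: "2 \<le> n" and pi: "p 1 1 1 \<noteq> 0"
    using assms by simp_all
  have qm: "regular_qmagma n p d"
    using assms(3) unfolding regular_qcycle_def by blast
  then have cp: "coalg_morph n p" and cd: "coalg_morph n d"
    unfolding regular_qmagma_def by blast+
  have pv: "p 0 1 1 = 0" and dv: "d 0 1 1 = 0"
    using regular_qmagma_left_coeffs_nonzero[OF qm n2]
      coalg_morph_no_linear_v_term[OF cp n2] coalg_morph_no_linear_v_term[OF cd n2]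
    by blast+
  have rel_p: "linear_cycle_relation n p p" and rel_d: "linear_cycle_relation n p d"
    using regular_qcycle_linear_cycle_relations[OF assms(3) n2 pv dv] by blast+
  have pu: "p 1 0 1 = 1" and du: "d 1 0 1 = 1"
    using regular_qmagma_left_coeffs_nonzero[OF qm n2]
      linear_cycle_relation_left_coeff[OF cp cp n2 pv pi _ rel_p]
      linear_cycle_relation_left_coeff[OF cp cd n2 pv pi _ rel_d]
    by blast+
  show ?thesis
    using linear_cycle_relation_right_unit[OF cp cp n2 pv pu pu pi rel_p]
      linear_cycle_relation_right_unit[OF cp cd n2 pv pu du pi rel_d]
    by (auto simp: less_Suc_eq_le)
qed

end
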